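(* Consider an $N$-player quadratic potential game under the disturbed gradient-based learning dynamics described in the context. For players $i\neq j$, player $i$ is disturbance decoupled from player $j$ if and only if player $j$ is disturbance decoupled from player $i$.
   Context: There are $N$ players, indexed by $[N]$; player $\ell$ has action $x_\ell\in\mathbb{R}^{n_\ell}$, $n=\sum_\ell n_\ell$. A quadratic game has costs $f_\ell(x)=\tfrac12 x_\ell^\top P_\ell x_\ell + x_\ell^\top\big(\sum_{m\neq \ell}P_{\ell m}x_m + r_\ell\big)$ with $P_\ell$ symmetric, $P_{\ell m}\in\mathbb{R}^{n_\ell\times n_m}$, $r_\ell\in\mathbb{R}^{n_\ell}$; it is a quadratic potential game if $P_{\ell m}=P_{m\ell}^\top$ for all $\ell\neq m$. Each player $\ell$ has step size $\gamma_\ell>0$ and updates $x_\ell^{k+1}=x_\ell^k-\gamma_\ell\big(D_\ell f_\ell(x^k)+d_\ell^k\big)$ with $D_\ell f_\ell=\partial f_\ell/\partial x_\ell$ and $d^k_\ell$ an arbitrary additive disturbance. Let $W$ be the block matrix with $W_{\ell\ell}=I-\gamma_\ell P_\ell$, $W_{\ell m}=-\gamma_\ell P_{\ell m}$, $\Gamma=\mathrm{blkdiag}(\gamma_1 I_{n_1},\ldots,\gamma_N I_{n_N})$, $\bar r=(r_1,\ldots,r_N)$. For a player $a$, let $\mathcal{D}_a=\{d\in\mathbb{R}^n : d_m=0\ \forall m\neq a\}$. The uncorrupted and corrupted dynamics (disturbance in player $a$'s gradient) are $x^{k+1}=Wx^k-\Gamma\bar r$ and $y^{k+1}=Wy^k-\Gamma\bar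 r-\Gamma d^k$ with $d^k\in\mathcal{D}_a$. Player $b\neq a$ is disturbance decoupled from player $a$ if for every initial $x^0$, with $y^0=x^0$, one has $y_b^k=x_b^k$ for all $k\ge0$ and all disturbance sequences with $d^k\in\mathcal{D}_a$. *)

theory Defs
  imports "HOL-Analysis.Analysis"
begin

text \<open>Players form a finite type 'p; the coordinates of the joint action x in R^n form a
finite type 'c; pl c is the player owning coordinate c (so x_l = (x c)_{pl c = l}).
The full matrix P :: real^'c^'c collects the blocks: block (l,l) is P_l and block (l,m),
l ~= m, is P_{lm}.\<close>

definition Wmat :: "('c::finite \<Rightarrow> 'p) \<Rightarrow> ('p \<Rightarrow> real) \<Rightarrow> real^'c^'c \<Rightarrow> real^'c^'c" where
  "Wmat pl gam P = (\<chi> c d. (if c = d then 1 else 0) - gam (pl c) * P$c$d)"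

definition Gmat :: "('c::finite \<Rightarrow> 'p) \<Rightarrow> ('p \<Rightarrow> real) \<Rightarrow> real^'c^'c" where
  "Gmat pl gam = (\<chi> c d. if c = d then gam (pl c) else 0)"

primrec traj_x :: "('c::finite \<Rightarrow> 'p) \<Rightarrow> ('p \<Rightarrow> real) \<Rightarrow> real^'c^'c \<Rightarrow> real^'c
    \<Rightarrow> real^'c \<Rightarrow> nat \<Rightarrow> real^'c" where
  "traj_x pl gam P r x0 0 = x0"
| "traj_x pl gam P r x0 (Suc k) =
     Wmat pl gam P *v traj_x pl gam P r x0 k - Gmat pl gam *v r"

primrec traj_y :: "('c::finite \<Rightarrow> 'p) \<Rightarrow> ('p \<Rightarrow> real) \<Rightarrow> real^'c^'c \<Rightarrow> real^'c
    \<Rightarrow> (nat \<Rightarrow> real^'c) \<Rightarrow> real^'c \<Rightarrow> nat \<Rightarrow> real^'c" where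
  "traj_y pl gam P r dst y0 0 = y0"
| "traj_y pl gam P r dst y0 (Suc k) =
     Wmat pl gam P *v traj_y pl gam P r dst y0 k - Gmat pl gam *v r - Gmat pl gam *v dst k"

definition Dset :: "('c::finite \<Rightarrow> 'p) \<Rightarrow> 'p \<Rightarrow> (real^'c) set" where
  "Dset pl a = {d. \<forall>c. pl c \<noteq> a \<longrightarrow> d$c = 0}"

definition dist_decoupled :: "('c::finite \<Rightarrow> 'p) \<Rightarrow> ('p \<Rightarrow> real) \<Rightarrow> real^'c^'c \<Rightarrow> real^'c
    \<Rightarrow> 'p \<Rightarrow> 'p \<Rightarrow> bool" where
  "dist_decoupled pl gam P r b a \<longleftrightarrow>
     (\<forall>x0 dst. (\<forall>k. dst k \<in> Dset pl a) \<longrightarrow>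
        (\<forall>k c. pl c = b \<longrightarrow> traj_y pl gam P r dst x0 k $ c = traj_x pl gam P r x0 k $ c))"

end

theory Submission
  imports Defs
begin

text \<open>The deviation e = y - x caused by the disturbance obeys e(k+1) = W e(k) - \<Gamma> d(k)
with e(0) = 0, so e(k) is minus the sum of W^(k-1-t) \<Gamma> d(t) over t < k. Hence player b
is decoupled from player a exactly when the (b,a) blocks of all matrices W^m \<Gamma> vanish;
impulse disturbances show necessity. For a potential game P is symmetric, so
W \<Gamma> = \<Gamma> W^T and every W^m \<Gamma> is symmetric: its (b,a) blocks are the transposes
of its (a,b) blocks.\<close>

primrec matpow :: "'a::semiring_1^'n^'n \<Rightarrow> nat \<Rightarrow> 'a^'n^'n" where
  "matpow A 0 = mat 1"
| "matpow A (Suc k) = A ** matpow A k"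

lemma matpow_Suc_right: "matpow A (Suc k) = matpow A k ** A"
  by (induction k) (simp_all add: matrix_mul_assoc)

lemma matpow_intertwine:
  fixes A G :: "'a::comm_semiring_1^'n^'n"
  assumes "A ** G = G ** transpose A"
  shows "matpow A k ** G = G ** transpose (matpow A k)"
proof (induction k)
  case 0
  then show ?case by simp
next
  case (Suc k)
  have "matpow A (Suc k) ** G = A ** (matpow A k ** G)"
    by (simp add: matrix_mul_assoc)
  also have "\<dots> = G ** (transpose A ** transpose (matpow A k))"
    by (simp add: Suc assms matrix_mul_assoc)
  also have "\<dots> = G ** transpose (matpow A (Suc k))"
    by (simp only: matpow_Suc_right matrix_transpose_mul)
  finally show ?case .
qed

lemma matpow_mul_symmetric:
  fixes A G :: "'a::comm_semiring_1^'n^'n"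
  assumes "A ** G = G ** transpose A" and "transpose G = G"
  shows "transpose (matpow A k ** G) = matpow A k ** G"
  by (simp add: matrix_transpose_mul assms matpow_intertwine)

lemma matrix_mul_Gmat_component: "(A ** Gmat pl gam) $ c $ d = A $ c $ d * gam (pl d)"
  by (simp add: matrix_matrix_mult_def Gmat_def if_distrib if_distribR cong: if_cong)

lemma Gmat_matrix_mul_component: "(Gmat pl gam ** A) $ c $ d = gam (pl c) * A $ c $ d"
  by (simp add: matrix_matrix_mult_def Gmat_def if_distrib if_distribR cong: if_cong)

lemma transpose_Gmat: "transpose (Gmat pl gam) = Gmat pl gam"
  by (simp add: vec_eq_iff transpose_def Gmat_def)

lemma Wmat_Gmat_intertwine:
  assumes "transpose P = P"
  shows "Wmat pl gam P ** Gmat pl gam = Gmat pl gam ** transpose (Wmat pl gam P)"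
proof -
  have "P $ c $ d = P $ d $ c" for c d
    by (metis assms transpose_def vec_lambda_beta)
  then show ?thesis
    by (simp add: vec_eq_iff matrix_mul_Gmat_component Gmat_matrix_mul_component
        transpose_def Wmat_def algebra_simps)
qed

lemma traj_y_minus_traj_x:
  "traj_y pl gam P r dst x0 k - traj_x pl gam P r x0 k
   = - (\<Sum>t<k. (matpow (Wmat pl gam P) (k - Suc t) ** Gmat pl gam) *v dst t)"
proof (induction k)
  case 0
  then show ?case by simp
next
  case (Suc k)
  let ?W = "Wmat pl gam P" and ?G = "Gmat pl gam"
  have "traj_y pl gam P r dst x0 (Suc k) - traj_x pl gam P r x0 (Suc k)
      = ?W *v (traj_y pl gam P r dst x0 k - traj_x pl gam P r x0 k) - ?G *v dst k"
    by (simp add: matrix_vector_mult_diff_distrib)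
  also have "\<dots> = - (\<Sum>t<k. ?W *v ((matpow ?W (k - Suc t) ** ?G) *v dst t)) - ?G *v dst k"
    by (simp add: Suc linear_neg linear_sum)
  also have "\<dots> = - (\<Sum>t<k. (matpow ?W (Suc k - Suc t) ** ?G) *v dst t) - ?G *v dst k"
  proof -
    have "?W *v ((matpow ?W (k - Suc t) ** ?G) *v v) = (matpow ?W (Suc k - Suc t) ** ?G) *v v"
      if "t < k" for t v
    proof -
      have "Suc k - Suc t = Suc (k - Suc t)"
        using that by simp
      then show ?thesis
        by (simp only: matpow.simps matrix_vector_mul_assoc matrix_mul_assoc)
    qed
    then show ?thesis by simp
  qed
  also have "\<dots> = - (\<Sum>t<Suc k. (matpow ?W (Suc k - Suc t) ** ?G) *v dst t)"
    by simp
  finally show ?case .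
qed

lemma matrix_vector_mult_component_eq_0:
  assumes "\<And>d. pl d = a \<Longrightarrow> M $ c $ d = 0" and "v \<in> Dset pl a"
  shows "(M *v v) $ c = 0"
proof -
  have "\<forall>d\<in>UNIV. M $ c $ d * v $ d = 0"
    using assms by (auto simp: Dset_def)
  then show ?thesis
    unfolding matrix_vector_mult_def vec_lambda_beta by (rule sum.neutral)
qed

lemma dist_decoupled_iff_blocks_eq_0:
  "dist_decoupled pl gam P r b a \<longleftrightarrow>
     (\<forall>m c d. pl c = b \<longrightarrow> pl d = a \<longrightarrow> (matpow (Wmat pl gam P) m ** Gmat pl gam) $ c $ d = 0)"
  (is "_ \<longleftrightarrow> (\<forall>m c d. _ \<longrightarrow> _ \<longrightarrow> ?M m $ c $ d = 0)")
proof
  assume decoupled: "dist_decoupled pl gam P r b a"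
  show "\<forall>m c d. pl c = b \<longrightarrow> pl d = a \<longrightarrow> ?M m $ c $ d = 0"
  proof (intro allI impI)
    fix m c d
    assume c: "pl c = b" and d: "pl d = a"
    define dst where "dst t = (if t = 0 then axis d 1 else 0 :: real^'a)" for t :: nat
    have "dst t \<in> Dset pl a" for t
      using d by (auto simp: dst_def Dset_def axis_def)
    then have "(traj_y pl gam P r dst 0 (Suc m) - traj_x pl gam P r 0 (Suc m)) $ c = 0"
      using decoupled c unfolding dist_decoupled_def
      by (simp del: traj_x.simps traj_y.simps)
    moreover have "traj_y pl gam P r dst 0 (Suc m) - traj_x pl gam P r 0 (Suc m)
        = - (?M m *v axis d 1)"
      unfolding traj_y_minus_traj_x sum.lessThan_Suc_shift by (simp add: dst_def)
    ultimately have "(- (?M m *v axis d 1)) $ c = 0"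
      by (simp only:)
    then show "?M m $ c $ d = 0"
      by (simp add: matrix_vector_mult_basis column_def)
  qed
next
  assume blocks: "\<forall>m c d. pl c = b \<longrightarrow> pl d = a \<longrightarrow> ?M m $ c $ d = 0"
  show "dist_decoupled pl gam P r b a"
    unfolding dist_decoupled_def
  proof (intro allI impI)
    fix x0 and dst :: "nat \<Rightarrow> _" and k :: nat and c
    assume dst: "\<forall>k. dst k \<in> Dset pl a" and c: "pl c = b"
    have "(?M m *v dst t) $ c = 0" for m t
      using blocks c dst by (blast intro: matrix_vector_mult_component_eq_0)
    then have "(traj_y pl gam P r dst x0 k - traj_x pl gam P r x0 k) $ c = 0"
      by (simp add: traj_y_minus_traj_x sum_component)
    then show "traj_y pl gam P r dst x0 k $ c = traj_x pl gam P r x0 k $ c"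
      by simp
  qed
qed

theorem corollary1:
  fixes pl :: "'c::finite \<Rightarrow> 'p::finite"
    and gam :: "'p \<Rightarrow> real"
    and P :: "real^'c^'c"
    and r :: "real^'c"
    and i j :: 'p
  assumes step_pos: "\<And>l. gam l > 0"
    and P_sym: "\<And>c d. pl c = pl d \<Longrightarrow> P$c$d = P$d$c"
    and potential: "\<And>c d. pl c \<noteq> pl d \<Longrightarrow> P$c$d = P$d$c"
    and ij: "i \<noteq> j"
  shows "dist_decoupled pl gam P r i j \<longleftrightarrow> dist_decoupled pl gam P r j i"
proof -
  let ?M = "\<lambda>m. matpow (Wmat pl gam P) m ** Gmat pl gam"
  have "transpose P = P"
    using P_sym potential by (auto simp: vec_eq_iff transpose_def)
  then have "transpose (?M m) = ?M m" for m
    by (intro matpow_mul_symmetric Wmat_Gmat_intertwine transpose_Gmat)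
  then have "?M m $ c $ d = ?M m $ d $ c" for m c d
    by (metis transpose_def vec_lambda_beta)
  then show ?thesis
    unfolding dist_decoupled_iff_blocks_eq_0 by metis
qed

end
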